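(* For every $A\in\mathrm{Sym}(\mathbb R^{n+1})\setminus\mathcal S$, we have $\det(I_n+\sqrt{-1}A)\neq 0$ and $$\mathrm{Re}\left(\frac{\det(I_n+\sqrt{-1}A)}{\det(I+\sqrt{-1}A^+)}\right)\ge 0,$$ i.e. $\Theta(A)-\theta(A^+)\in[-\pi/2,\pi/2]\subset S^1=\mathbb R/2\pi\mathbb Z$, where $\Theta(A)=\arg\det(I_n+\sqrt{-1}A)$ and $\theta(A^+)=\arg\det(I+\sqrt{-1}A^+)$ modulo $2\pi$.
   Context: $I_n=\mathrm{diag}(0,1,\dots,1)\in\mathrm{Sym}(\mathbb R^{n+1})$, $I$ is the $n\times n$ identity. For $A=[a_{ij}]_{i,j=0}^n$, $A^+=[a_{ij}]_{i,j=1}^n$. $\mathcal S=\{A: A=\mathrm{diag}(0,A^+)\}$. *)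

theory Defs
  imports "Jordan_Normal_Form.Determinant"
begin

text \<open>Matrices indexed 0..n. I_n = diag(0,1,...,1) of size (n+1)x(n+1).\<close>
definition In_mat :: "nat \<Rightarrow> complex mat" where
  "In_mat n = mat (n+1) (n+1) (\<lambda>(i,j). if i = j \<and> i \<noteq> 0 then 1 else 0)"

definition plus_part :: "'a mat \<Rightarrow> 'a mat" where
  "plus_part A = mat (dim_row A - 1) (dim_col A - 1) (\<lambda>(i,j). A $$ (i+1, j+1))"

definition in_S :: "'a::zero mat \<Rightarrow> bool" where
  "in_S A \<longleftrightarrow> (\<forall>j < dim_col A. A $$ (0, j) = 0) \<and> (\<forall>i < dim_row A. A $$ (i, 0) = 0)"

definition cmat :: "real mat \<Rightarrow> complex mat" where
  "cmat A = map_mat complex_of_real A"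

end

theory Submission imports Defs begin

text \<open>Write \<open>A\<close> in block form with corner \<open>a\<close>, first column \<open>b\<close> below it and lower block
\<open>S = A\<^sup>+\<close>, and let \<open>B = I + i S\<close>. Since \<open>Re \<langle>v, B v\<rangle> = |v|\<^sup>2\<close>, \<open>B\<close> is invertible; with
\<open>B z = b\<close> the Schur complement gives \<open>det (I\<^sub>n + i A) = c \<cdot> det B\<close> for \<open>c = i a + b\<^sup>T z\<close>, and
\<open>Re c = Re \<langle>z, B z\<rangle> = |z|\<^sup>2 \<ge> 0\<close>. Finally \<open>c = 0\<close> would force \<open>z = 0\<close>, hence \<open>b = 0\<close> and
\<open>a = 0\<close>, i.e. \<open>A \<in> \<S>\<close>.\<close>

lemma quadratic_form_real_symmetric_Im_eq_0:
  fixes S :: "real mat" and v :: "complex vec"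
  assumes "transpose_mat S = S" "S \<in> carrier_mat n n"
  shows "Im (\<Sum>k<n. \<Sum>j<n. cnj (v $ k) * of_real (S $$ (k,j)) * v $ j) = 0"
proof -
  let ?Q = "\<Sum>k<n. \<Sum>j<n. cnj (v $ k) * of_real (S $$ (k,j)) * v $ j"
  have S_sym: "S $$ (j,k) = S $$ (k,j)" if "j < n" "k < n" for j k
    using arg_cong[OF assms(1), of "\<lambda>X. X $$ (j,k)"] that assms(2) by auto
  have "cnj ?Q = (\<Sum>k<n. \<Sum>j<n. v $ k * of_real (S $$ (k,j)) * cnj (v $ j))"
    by (simp add: cnj_sum)
  also have "\<dots> = (\<Sum>j<n. \<Sum>k<n. v $ k * of_real (S $$ (k,j)) * cnj (v $ j))"
    by (rule sum.swap)
  also have "\<dots> = ?Q"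
    by (intro sum.cong refl) (simp add: S_sym mult.commute mult.left_commute)
  finally have "?Q \<in> \<real>"
    by (simp only: Reals_cnj_iff)
  then show ?thesis
    by (simp only: complex_is_Real_iff)
qed

lemma mult_mat_vec_one_plus_i_index:
  fixes S :: "real mat" and v :: "complex vec"
  assumes "S \<in> carrier_mat n n" "v \<in> carrier_vec n" "k < n"
  shows "((1\<^sub>m n + \<i> \<cdot>\<^sub>m cmat S) *\<^sub>v v) $ k = v $ k + \<i> * (\<Sum>j<n. of_real (S $$ (k,j)) * v $ j)"
proof -
  have "((1\<^sub>m n + \<i> \<cdot>\<^sub>m cmat S) *\<^sub>v v) $ k
      = (\<Sum>j<n. ((if k = j then 1 else 0) + \<i> * of_real (S $$ (k,j))) * v $ j)"
    using assms by (auto simp: cmat_def scalar_prod_def atLeast0LessThan intro!: sum.cong)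
  also have "\<dots> = (\<Sum>j<n. (if k = j then v $ j else 0) + \<i> * (of_real (S $$ (k,j)) * v $ j))"
    by (intro sum.cong refl) (auto simp: algebra_simps)
  also have "\<dots> = v $ k + \<i> * (\<Sum>j<n. of_real (S $$ (k,j)) * v $ j)"
    using assms by (simp add: sum.distrib sum_distrib_left)
  finally show ?thesis .
qed

lemma Re_inner_one_plus_i_symmetric:
  fixes S :: "real mat" and v :: "complex vec"
  assumes "transpose_mat S = S" "S \<in> carrier_mat n n" "v \<in> carrier_vec n"
  shows "Re (\<Sum>k<n. cnj (v $ k) * ((1\<^sub>m n + \<i> \<cdot>\<^sub>m cmat S) *\<^sub>v v) $ k) = (\<Sum>k<n. (cmod (v $ k))\<^sup>2)"
proof -
  have "(\<Sum>k<n. cnj (v $ k) * ((1\<^sub>m n + \<i> \<cdot>\<^sub>m cmat S) *\<^sub>v v) $ k)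
      = (\<Sum>k<n. cnj (v $ k) * v $ k) + \<i> * (\<Sum>k<n. \<Sum>j<n. cnj (v $ k) * of_real (S $$ (k,j)) * v $ j)"
    using assms(2,3)
    by (simp add: mult_mat_vec_one_plus_i_index sum.distrib distrib_left sum_distrib_left
        mult.assoc mult.left_commute)
  moreover have "Re (\<Sum>k<n. cnj (v $ k) * v $ k) = (\<Sum>k<n. (cmod (v $ k))\<^sup>2)"
    by (simp add: complex_mult_cnj cmod_power2 mult.commute)
  ultimately show ?thesis
    using quadratic_form_real_symmetric_Im_eq_0[OF assms(1,2)] by simp
qed

lemma det_one_plus_i_symmetric_neq_0:
  fixes S :: "real mat"
  assumes "transpose_mat S = S" "S \<in> carrier_mat n n"
  shows "det (1\<^sub>m n + \<i> \<cdot>\<^sub>m cmat S) \<noteq> 0"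
proof
  have B: "1\<^sub>m n + \<i> \<cdot>\<^sub>m cmat S \<in> carrier_mat n n"
    using assms(2) by (simp add: cmat_def)
  assume "det (1\<^sub>m n + \<i> \<cdot>\<^sub>m cmat S) = 0"
  then obtain v where v: "v \<in> carrier_vec n" "v \<noteq> 0\<^sub>v n"
    and Bv: "(1\<^sub>m n + \<i> \<cdot>\<^sub>m cmat S) *\<^sub>v v = 0\<^sub>v n"
    using det_0_iff_vec_prod_zero_field[OF B] by auto
  have "(\<Sum>k<n. (cmod (v $ k))\<^sup>2) = 0"
    using Re_inner_one_plus_i_symmetric[OF assms v(1)] by (simp add: Bv)
  then have "\<forall>k\<in>{..<n}. (cmod (v $ k))\<^sup>2 = 0"
    by (subst sum_nonneg_eq_0_iff[symmetric]) auto
  then have "v = 0\<^sub>v n"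
    using v(1) by (intro eq_vecI) auto
  with v(2) show False ..
qed

lemma exists_mult_mat_vec_eq:
  fixes B :: "'a::field mat"
  assumes "B \<in> carrier_mat n n" "det B \<noteq> 0" "b \<in> carrier_vec n"
  obtains x where "x \<in> carrier_vec n" "B *\<^sub>v x = b"
proof -
  obtain B' where B': "B' \<in> carrier_mat n n" "B * B' = 1\<^sub>m n"
    using det_non_zero_imp_unit[OF assms(1,2), of "()"] unfolding Units_def ring_mat_def by auto
  have "B *\<^sub>v (B' *\<^sub>v b) = b"
    using assoc_mult_mat_vec[OF assms(1) B'(1) assms(3)] B'(2) assms(3) by simp
  with mult_mat_vec_carrier[OF B'(1) assms(3)] show thesis
    by (rule that)
qed

lemma Re_real_inner_solution_one_plus_i_symmetric:
  fixes S :: "real mat" and b :: "real vec" and z :: "complex vec"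
  assumes "transpose_mat S = S" "S \<in> carrier_mat n n" "z \<in> carrier_vec n"
    and "(1\<^sub>m n + \<i> \<cdot>\<^sub>m cmat S) *\<^sub>v z = map_vec of_real b"
  shows "Re (\<Sum>k<n. of_real (b $ k) * z $ k) = (\<Sum>k<n. (cmod (z $ k))\<^sup>2)"
proof -
  have "dim_vec b = n"
    using arg_cong[OF assms(4), of dim_vec] assms(2) by (simp add: cmat_def)
  then have "(\<Sum>k<n. cnj (z $ k) * ((1\<^sub>m n + \<i> \<cdot>\<^sub>m cmat S) *\<^sub>v z) $ k)
      = cnj (\<Sum>k<n. of_real (b $ k) * z $ k)"
    by (simp add: assms(4) mult.commute)
  then show ?thesis
    using Re_inner_one_plus_i_symmetric[OF assms(1-3)] by simp
qed

lemma det_eq_schur_complement_mult_det_mat_delete: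
  fixes M :: "'a::comm_ring_1 mat" and y :: "'a vec"
  assumes M: "M \<in> carrier_mat (Suc n) (Suc n)" and y: "y \<in> carrier_vec n"
    and solves: "\<And>i. i < n \<Longrightarrow> (\<Sum>k<n. M $$ (Suc i, Suc k) * y $ k) = M $$ (Suc i, 0)"
  shows "det M = (M $$ (0,0) - (\<Sum>k<n. M $$ (0, Suc k) * y $ k)) * det (mat_delete M 0 0)"
proof -
  define E where "E = mat (Suc n) (Suc n)
    (\<lambda>(i,j). if i = j then 1 else if j = 0 then - y $ (i - 1) else 0)"
  have E: "E \<in> carrier_mat (Suc n) (Suc n)"
    by (simp add: E_def)
  have "det E = prod_list (diag_mat E)"
    by (rule det_lower_triangular[OF _ E]) (auto simp: E_def)
  also have "diag_mat E = map (\<lambda>_. 1) [0..<Suc n]"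
    unfolding diag_mat_def E_def by (intro map_cong) auto
  finally have det_E: "det E = 1"
    by (simp add: map_replicate_const)
  define N where "N = M * E"
  have N: "N \<in> carrier_mat (Suc n) (Suc n)"
    using M E by (simp add: N_def)
  have N_index: "N $$ (i,j) = (\<Sum>k<Suc n. M $$ (i,k) * E $$ (k,j))" if "i < Suc n" "j < Suc n" for i j
    using that M E by (auto simp: N_def scalar_prod_def atLeast0LessThan)
  have N_col_0: "N $$ (i,0) = M $$ (i,0) - (\<Sum>k<n. M $$ (i, Suc k) * y $ k)" if "i < Suc n" for i
    using that by (simp add: N_index sum.lessThan_Suc_shift E_def sum_negf del: sum.lessThan_Suc)
  have E_col_Suc: "E $$ (k, Suc j) = (if k = Suc j then 1 else 0)" if "k < Suc n" "j < n" for k j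
    using that by (simp add: E_def)
  have N_col_Suc: "N $$ (i, Suc j) = M $$ (i, Suc j)" if "i < Suc n" "j < n" for i j
    using that
    by (simp add: N_index E_col_Suc if_distrib[of "(*) _"] cong: if_cong sum.cong_simp del: sum.lessThan_Suc)
  have "det M = det N"
    using det_mult[OF M E] det_E by (simp add: N_def)
  also have "\<dots> = (\<Sum>i<Suc n. N $$ (i,0) * cofactor N i 0)"
    by (rule laplace_expansion_column[OF N]) simp
  also have "\<dots> = N $$ (0,0) * det (mat_delete N 0 0)"
    using solves by (simp add: sum.lessThan_Suc_shift N_col_0 cofactor_def del: sum.lessThan_Suc)
  also have "mat_delete N 0 0 = mat_delete M 0 0"
    using M N by (intro eq_matI) (auto simp: mat_delete_def N_col_Suc)
  finally show ?thesis
    by (simp add: N_col_0)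
qed

lemma transpose_plus_part: "transpose_mat (plus_part A) = plus_part (transpose_mat A)"
  by (intro eq_matI) (auto simp: plus_part_def)

lemma plus_part_carrier: "A \<in> carrier_mat (Suc n) (Suc n) \<Longrightarrow> plus_part A \<in> carrier_mat n n"
  by (simp add: plus_part_def)

lemma index_In_mat_plus_i:
  assumes "A \<in> carrier_mat (Suc n) (Suc n)" "i < Suc n" "j < Suc n"
  shows "(In_mat n + \<i> \<cdot>\<^sub>m cmat A) $$ (i,j) = (if i = j \<and> i \<noteq> 0 then 1 else 0) + \<i> * of_real (A $$ (i,j))"
  using assms by (simp add: In_mat_def cmat_def)

lemma mat_delete_In_mat_plus_i:
  assumes "A \<in> carrier_mat (Suc n) (Suc n)"
  shows "mat_delete (In_mat n + \<i> \<cdot>\<^sub>m cmat A) 0 0 = 1\<^sub>m n + \<i> \<cdot>\<^sub>m cmat (plus_part A)"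
  using assms by (intro eq_matI) (auto simp: mat_delete_def In_mat_def plus_part_def cmat_def)

lemma symmetric_not_in_S_corner_neq_0:
  fixes A :: "'a::zero mat"
  assumes "A \<in> carrier_mat (Suc n) (Suc n)" "transpose_mat A = A" "\<not> in_S A"
    and "\<And>k. k < n \<Longrightarrow> A $$ (Suc k, 0) = 0"
  shows "A $$ (0,0) \<noteq> 0"
proof
  assume corner: "A $$ (0,0) = 0"
  have col: "A $$ (i,0) = 0" if "i < Suc n" for i
    using that corner assms(4) by (cases i) auto
  moreover have "A $$ (0,j) = 0" if "j < Suc n" for j
    using col[OF that] arg_cong[OF assms(2), of "\<lambda>X. X $$ (0,j)"] that assms(1) by auto
  ultimately show False
    using assms(1,3) by (auto simp: in_S_def)
qed

lemma det_In_mat_plus_i_eq_schur_complement: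
  fixes A :: "real mat" and z :: "complex vec"
  assumes A: "A \<in> carrier_mat (Suc n) (Suc n)" and A_sym: "transpose_mat A = A"
    and z: "z \<in> carrier_vec n"
    and solves: "(1\<^sub>m n + \<i> \<cdot>\<^sub>m cmat (plus_part A)) *\<^sub>v z = map_vec of_real (vec n (\<lambda>k. A $$ (Suc k, 0)))"
  shows "det (In_mat n + \<i> \<cdot>\<^sub>m cmat A)
    = (\<i> * of_real (A $$ (0,0)) + (\<Sum>k<n. of_real (A $$ (Suc k, 0)) * z $ k))
      * det (1\<^sub>m n + \<i> \<cdot>\<^sub>m cmat (plus_part A))"
proof -
  define M where "M = In_mat n + \<i> \<cdot>\<^sub>m cmat A"
  define B where "B = 1\<^sub>m n + \<i> \<cdot>\<^sub>m cmat (plus_part A)"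
  have M: "M \<in> carrier_mat (Suc n) (Suc n)"
    using A by (simp add: M_def In_mat_def cmat_def)
  have B: "B \<in> carrier_mat n n"
    using A by (simp add: B_def cmat_def plus_part_def)
  have B_index: "B $$ (i,k) = M $$ (Suc i, Suc k)" if "i < n" "k < n" for i k
    using that A by (simp add: B_def M_def In_mat_def plus_part_def cmat_def)
  have row_0: "A $$ (0, Suc k) = A $$ (Suc k, 0)" if "k < n" for k
    using arg_cong[OF A_sym, of "\<lambda>X. X $$ (Suc k, 0)"] that A by auto
  have "(\<Sum>k<n. M $$ (Suc i, Suc k) * (\<i> \<cdot>\<^sub>v z) $ k) = M $$ (Suc i, 0)" if "i < n" for i
  proof -
    have "(B *\<^sub>v z) $ i = (\<Sum>k<n. M $$ (Suc i, Suc k) * z $ k)"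
      using that B z by (simp add: scalar_prod_def atLeast0LessThan B_index)
    then show ?thesis
      using that z A solves by (simp add: B_def M_def index_In_mat_plus_i sum_distrib_left mult_ac)
  qed
  from det_eq_schur_complement_mult_det_mat_delete[OF M _ this] A z
  show ?thesis
    by (simp add: M_def B_def mat_delete_In_mat_plus_i index_In_mat_plus_i row_0 sum_negf mult_ac)
qed

theorem lemma3p4:
  fixes n :: nat and A :: "real mat"
  assumes "A \<in> carrier_mat (n+1) (n+1)"
    and "transpose_mat A = A"
    and "\<not> in_S A"
  shows "det (In_mat n + \<i> \<cdot>\<^sub>m cmat A) \<noteq> 0
    \<and> Re (det (In_mat n + \<i> \<cdot>\<^sub>m cmat A) / det (1\<^sub>m n + \<i> \<cdot>\<^sub>m cmat (plus_part A))) \<ge> 0"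
proof -
  have A: "A \<in> carrier_mat (Suc n) (Suc n)"
    using assms(1) by simp
  define B where "B = 1\<^sub>m n + \<i> \<cdot>\<^sub>m cmat (plus_part A)"
  define b where "b = vec n (\<lambda>k. A $$ (Suc k, 0))"
  have P: "transpose_mat (plus_part A) = plus_part A" "plus_part A \<in> carrier_mat n n"
    using A assms(2) by (simp_all add: plus_part_carrier transpose_plus_part)
  have B: "B \<in> carrier_mat n n" "det B \<noteq> 0"
    using P det_one_plus_i_symmetric_neq_0[OF P] by (simp_all add: B_def cmat_def)
  obtain z where z: "z \<in> carrier_vec n" "B *\<^sub>v z = map_vec of_real b"
    using exists_mult_mat_vec_eq[OF B, of "map_vec of_real b"] by (auto simp: b_def)
  define c where "c = \<i> * of_real (A $$ (0,0)) + (\<Sum>k<n. of_real (b $ k) * z $ k)"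
  have det_eq: "det (In_mat n + \<i> \<cdot>\<^sub>m cmat A) = c * det B"
    using det_In_mat_plus_i_eq_schur_complement[OF A assms(2) z[unfolded B_def b_def]]
    by (simp add: c_def b_def B_def)
  have Re_c: "Re c = (\<Sum>k<n. (cmod (z $ k))\<^sup>2)"
    using Re_real_inner_solution_one_plus_i_symmetric[OF P z(1)] z(2) by (simp add: c_def B_def)
  have "c \<noteq> 0"
  proof (cases "z = 0\<^sub>v n")
    case True
    then have "A $$ (Suc k, 0) = 0" if "k < n" for k
      using z(2) B(1) that by (auto simp: b_def dest!: arg_cong[where f = "\<lambda>v. v $ k"])
    then show ?thesis
      using symmetric_not_in_S_corner_neq_0[OF A assms(2,3)] True by (simp add: c_def b_def)
  next
    case False
    then obtain k where "k < n" "z $ k \<noteq> 0"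
      using z(1) by (metis carrier_vecD eq_vecI index_zero_vec(1,2))
    then have "Re c > 0"
      unfolding Re_c by (intro sum_pos2[of _ k]) auto
    then show ?thesis
      by auto
  qed
  then show ?thesis
    using det_eq B(2) Re_c by (simp add: B_def sum_nonneg)
qed

end
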